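(* Let $\phi=\frac{1+\sqrt5}{2}$, let $\Gamma\subset SL_2(\mathbb R)$ be the group generated by $$\sigma_0=\begin{pmatrix}1&\phi\\0&1\end{pmatrix},\quad \sigma_1=\begin{pmatrix}\phi&\phi\\1&\phi\end{pmatrix},\quad \sigma_2=\begin{pmatrix}\phi&1\\\phi&\phi\end{pmatrix},\quad \sigma_3=\begin{pmatrix}1&0\\\phi&1\end{pmatrix},$$ and let $S=\{\gamma\binom{1}{0}:\gamma\in\Gamma\}$. Let $v_1,v_2\in S$ be distinct, write $v_1-v_2=\binom{x}{y}$, and let $\lambda=\gcd_{\Gamma^+}(x,y)$. Then there are two points of $S$ lying on a common horizontal line at distance exactly $\lambda$ from each other.
   Context: $S\subset\mathbb Z[\phi]^2$. For $x,y\in\mathbb Z[\phi]$ not both zero, $\gcd_{\Gamma^+}(x,y)$ denotes the positive real number $\lambda$ such that $\lambda^{-1}\binom{|x|}{|y|}\in S$ (it is known, from the Davis–Lelièvre gcd algorithm for $\mathbb Z[\phi]$, that such $\lambda$ exists and is unique; it is the representative of the gcd of $|x|,|y|$ produced by that algorithm). $\Gamma$ acts on $\mathbb R^2$ by matrix multiplication on column vectors. *)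

theory Defs
  imports "HOL-Analysis.Analysis"
begin

definition phi :: real where "phi = (1 + sqrt 5) / 2"

definition sigma0 :: "real^2^2" where "sigma0 = vector [vector [1, phi], vector [0, 1]]"
definition sigma1 :: "real^2^2" where "sigma1 = vector [vector [phi, phi], vector [1, phi]]"
definition sigma2 :: "real^2^2" where "sigma2 = vector [vector [phi, 1], vector [phi, phi]]"
definition sigma3 :: "real^2^2" where "sigma3 = vector [vector [1, 0], vector [phi, 1]]"

definition gens :: "(real^2^2) set" where "gens = {sigma0, sigma1, sigma2, sigma3}"

inductive_set Gamma :: "(real^2^2) set" where
  id: "mat 1 \<in> Gamma"
| mul: "g \<in> gens \<Longrightarrow> h \<in> Gamma \<Longrightarrow> g ** h \<in> Gamma"
| mul_inv: "g \<in> gens \<Longrightarrow> h \<in> Gamma \<Longrightarrow> matrix_inv g ** h \<in> Gamma"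

definition S :: "(real^2) set" where "S = {\<gamma> *v vector [1, 0] | \<gamma>. \<gamma> \<in> Gamma}"

definition gcd_Gamma_plus :: "real \<Rightarrow> real \<Rightarrow> real" where
  "gcd_Gamma_plus x y = (THE l. l > 0 \<and> vector [\<bar>x\<bar> / l, \<bar>y\<bar> / l] \<in> S)"

end

theory Submission
  imports Defs
begin

(* Every pair of non-negative elements of Z[phi], not both zero, is a positive multiple of a point
   of the positive orbit M, the smallest set containing e1 and e2 that is closed under
   sigma0, ..., sigma3. This follows from a Euclidean descent: undoing sigma0 (if a >= phi b) or
   sigma1 (otherwise) strictly decreases the height |a b'| + |a' b|, where ' is Galois conjugation,
   and the height is the size |z| + |z'| of z = a b', which takes only finitely many values below any
   bound. Conversely each inverse sigma_k^-1 maps M into the sign variants of M, so S consists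
   exactly of the sign variants of M. Hence the only positive multiple of e1 in S is e1 itself,
   which determines lambda, and v1 - v2 = lambda gamma e1 for some gamma in Gamma; applying
   gamma^-1 to v1 and v2 gives two points of S whose difference is (lambda, 0). *)

section \<open>The golden ratio and the ring \<open>\<int>[\<phi>]\<close>\<close>

lemma phi_times_phi: "phi * phi = phi + 1"
  unfolding phi_def by (simp add: field_simps)

lemma phi_gt_1: "1 < phi"
  unfolding phi_def by simp

lemma five_dvd_square: "5 dvd (m::nat)\<^sup>2 \<Longrightarrow> 5 dvd m"
proof -
  assume "5 dvd m\<^sup>2"
  moreover have "m\<^sup>2 mod 5 = (m mod 5)\<^sup>2 mod 5" by (simp add: power_mod)
  moreover have "m mod 5 \<in> {0, 1, 2, 3, 4}" by auto
  ultimately show ?thesis by auto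
qed

lemma sqrt5_irrational: "sqrt 5 \<notin> \<rat>"
proof
  assume "sqrt 5 \<in> \<rat>"
  then obtain m n :: nat where "n \<noteq> 0" "\<bar>sqrt 5\<bar> = real m / real n" "coprime m n"
    by (rule Rats_abs_nat_div_natE)
  then have "real m = real n * sqrt 5" by (simp add: field_simps)
  then have "real (m\<^sup>2) = real (5 * n\<^sup>2)" by (simp add: power_mult_distrib)
  then have eq: "m\<^sup>2 = 5 * n\<^sup>2" by (simp only: of_nat_eq_iff)
  then obtain k where k: "m = 5 * k" using five_dvd_square by (metis dvd_triv_left dvd_def)
  then have "n\<^sup>2 = 5 * k\<^sup>2" using eq by (simp add: power_mult_distrib)
  then have "5 dvd n" using five_dvd_square by simp
  moreover have "5 dvd m" using k by simp
  ultimately show False using \<open>coprime m n\<close> coprime_common_divisor_nat by fastforce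
qed

lemma phi_irrational: "phi \<notin> \<rat>"
proof
  assume "phi \<in> \<rat>"
  then have "2 * phi - 1 \<in> \<rat>" by simp
  moreover have "2 * phi - 1 = sqrt 5" unfolding phi_def by (simp add: field_simps)
  ultimately show False using sqrt5_irrational by simp
qed

definition psi :: real where "psi = 1 - phi"

lemma phi_mult_phi: "phi * (phi * c) = phi * c + c"
  by (simp add: phi_times_phi algebra_simps flip: mult.assoc)

lemma psi_mult_psi: "psi * (psi * c) = psi * c + c"
  unfolding psi_def by (simp add: phi_mult_phi algebra_simps)

lemma abs_psi: "\<bar>psi\<bar> = phi - 1"
  unfolding psi_def using phi_gt_1 by simp

type_synonym zphi = "int \<times> int"

fun emb :: "zphi \<Rightarrow> real" where
  "emb (m, n) = of_int m + of_int n * phi"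

fun conj_emb :: "zphi \<Rightarrow> real" where
  "conj_emb (m, n) = of_int m + of_int n * psi"

fun zmult :: "zphi \<Rightarrow> zphi \<Rightarrow> zphi" where
  "zmult (a, b) (c, d) = (a * c + b * d, a * d + b * c + b * d)"

fun zconj :: "zphi \<Rightarrow> zphi" where
  "zconj (m, n) = (m + n, - n)"

lemma emb_add: "emb (p + q) = emb p + emb q"
  by (cases p; cases q) (simp add: algebra_simps)

lemma emb_diff: "emb (p - q) = emb p - emb q"
  by (cases p; cases q) (simp add: algebra_simps)

lemma conj_emb_diff: "conj_emb (p - q) = conj_emb p - conj_emb q"
  by (cases p; cases q) (simp add: algebra_simps)

lemma emb_zmult: "emb (zmult p q) = emb p * emb q"
  by (cases p; cases q) (simp add: algebra_simps phi_mult_phi)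

lemma conj_emb_zmult: "conj_emb (zmult p q) = conj_emb p * conj_emb q"
  by (cases p; cases q) (simp add: algebra_simps psi_mult_psi)

lemma emb_zconj: "emb (zconj p) = conj_emb p"
  by (cases p) (simp add: psi_def algebra_simps)

lemma conj_emb_zconj: "conj_emb (zconj p) = emb p"
  by (cases p) (simp add: psi_def algebra_simps)

lemma int_combination_phi_eq_0:
  assumes "of_int m + of_int n * phi = 0"
  shows "m = 0 \<and> n = 0"
proof -
  have "n = 0"
  proof (rule ccontr)
    assume "n \<noteq> 0"
    with assms have "phi = - (of_int m / of_int n)" by (simp add: field_simps)
    also have "\<dots> \<in> \<rat>" by simp
    finally show False using phi_irrational by simp
  qed
  then show ?thesis using assms by simp
qed

lemma conj_emb_eq_0_iff: "conj_emb p = 0 \<longleftrightarrow> p = 0"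
proof (cases p)
  case (Pair m n)
  have "conj_emb p = of_int (m + n) + of_int (- n) * phi"
    using Pair by (simp add: psi_def algebra_simps)
  then show ?thesis
    using int_combination_phi_eq_0 [of "m + n" "- n"] Pair by (auto simp: zero_prod_def)
qed

definition Zphi :: "real set" where "Zphi = range emb"

lemma Zphi_0: "0 \<in> Zphi" and Zphi_1: "1 \<in> Zphi"
  unfolding Zphi_def using rangeI [of emb "(0, 0)"] rangeI [of emb "(1, 0)"] by simp_all

lemma Zphi_add: "a \<in> Zphi \<Longrightarrow> b \<in> Zphi \<Longrightarrow> a + b \<in> Zphi"
  unfolding Zphi_def by (auto simp del: emb.simps simp flip: emb_add)

lemma Zphi_diff: "a \<in> Zphi \<Longrightarrow> b \<in> Zphi \<Longrightarrow> a - b \<in> Zphi"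
  unfolding Zphi_def by (auto simp del: emb.simps simp flip: emb_diff)

lemma Zphi_uminus: "a \<in> Zphi \<Longrightarrow> - a \<in> Zphi"
  using Zphi_diff [OF Zphi_0] by simp

lemma Zphi_abs_iff: "\<bar>a\<bar> \<in> Zphi \<longleftrightarrow> a \<in> Zphi"
  using Zphi_uminus by (cases "0 \<le> a") force+

lemma Zphi_mult_phi:
  assumes "a \<in> Zphi"
  shows "phi * a \<in> Zphi"
proof -
  obtain p where "a = emb p" using assms unfolding Zphi_def by auto
  then have "phi * a = emb (zmult (0, 1) p)" by (simp add: emb_zmult)
  then show ?thesis unfolding Zphi_def by simp
qed

section \<open>The positive orbit\<close>

text \<open>The actions of \<open>\<sigma>\<^sub>k\<close> and \<open>\<sigma>\<^sub>k\<^sup>-\<^sup>1\<close> on column vectors \<open>(x, y)\<close>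
  (lemmas \<open>sigma_action\<close> and \<open>sigma_inv_action\<close>).\<close>

fun s0 :: "real \<times> real \<Rightarrow> real \<times> real" where "s0 (x, y) = (x + phi * y, y)"
fun s1 :: "real \<times> real \<Rightarrow> real \<times> real" where "s1 (x, y) = (phi * x + phi * y, x + phi * y)"
fun s2 :: "real \<times> real \<Rightarrow> real \<times> real" where "s2 (x, y) = (phi * x + y, phi * x + phi * y)"
fun s3 :: "real \<times> real \<Rightarrow> real \<times> real" where "s3 (x, y) = (x, phi * x + y)"

fun s0_inv :: "real \<times> real \<Rightarrow> real \<times> real" where "s0_inv (x, y) = (x - phi * y, y)"
fun s1_inv :: "real \<times> real \<Rightarrow> real \<times> real" where "s1_inv (x, y) = (phi * x - phi * y, phi * y - x)"
fun s2_inv :: "real \<times> real \<Rightarrow> real \<times> real" where "s2_inv (x, y) = (phi * x - y, phi * y - phi * x)"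
fun s3_inv :: "real \<times> real \<Rightarrow> real \<times> real" where "s3_inv (x, y) = (x, y - phi * x)"

inductive_set pos_orbit :: "(real \<times> real) set" where
  e1: "(1, 0) \<in> pos_orbit"
| e2: "(0, 1) \<in> pos_orbit"
| s0: "w \<in> pos_orbit \<Longrightarrow> s0 w \<in> pos_orbit"
| s1: "w \<in> pos_orbit \<Longrightarrow> s1 w \<in> pos_orbit"
| s2: "w \<in> pos_orbit \<Longrightarrow> s2 w \<in> pos_orbit"
| s3: "w \<in> pos_orbit \<Longrightarrow> s3 w \<in> pos_orbit"

lemma one_le_phi_combinations:
  assumes "1 \<le> x" "1 \<le> y"
  shows "1 \<le> x + phi * y" "1 \<le> phi * x + y" "1 \<le> phi * x + phi * y"
proof -
  have "1 \<le> phi * t" if "1 \<le> t" for t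
    using phi_gt_1 that by (smt (verit) mult_le_cancel_left1)
  then show "1 \<le> x + phi * y" "1 \<le> phi * x + y" "1 \<le> phi * x + phi * y"
    using assms by (smt (verit))+
qed

lemma pos_orbit_shape:
  assumes "w \<in> pos_orbit"
  shows "w = (1, 0) \<or> w = (0, 1) \<or> (1 \<le> fst w \<and> 1 \<le> snd w)"
  using assms
proof (induction rule: pos_orbit.induct)
  case (s0 w)
  then show ?case
    by (cases w rule: prod.exhaust) (auto simp: one_le_phi_combinations phi_gt_1 less_imp_le)
next
  case (s1 w)
  then show ?case
    by (cases w rule: prod.exhaust) (auto simp: one_le_phi_combinations phi_gt_1 less_imp_le)
next
  case (s2 w)
  then show ?case
    by (cases w rule: prod.exhaust) (auto simp: one_le_phi_combinations phi_gt_1 less_imp_le)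
next
  case (s3 w)
  then show ?case
    by (cases w rule: prod.exhaust) (auto simp: one_le_phi_combinations phi_gt_1 less_imp_le)
qed simp_all

lemma pos_orbit_nonneg: "w \<in> pos_orbit \<Longrightarrow> 0 \<le> fst w \<and> 0 \<le> snd w"
  using pos_orbit_shape by fastforce

lemma swap_s0: "prod.swap (s0 w) = s3 (prod.swap w)"
  and swap_s1: "prod.swap (s1 w) = s2 (prod.swap w)"
  and swap_s2: "prod.swap (s2 w) = s1 (prod.swap w)"
  and swap_s3: "prod.swap (s3 w) = s0 (prod.swap w)"
  by (cases w; simp add: add.commute)+

lemma pos_orbit_swap: "w \<in> pos_orbit \<Longrightarrow> prod.swap w \<in> pos_orbit"
  by (induction rule: pos_orbit.induct)
    (auto simp: swap_s0 swap_s1 swap_s2 swap_s3 intro: pos_orbit.intros)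

lemma pos_orbit_Zphi: "w \<in> pos_orbit \<Longrightarrow> fst w \<in> Zphi \<and> snd w \<in> Zphi"
  by (induction rule: pos_orbit.induct)
    (auto simp: Zphi_0 Zphi_1 split: prod.splits intro!: Zphi_add Zphi_mult_phi)

section \<open>A Euclidean descent in \<open>\<int>[\<phi>]\<close>\<close>

definition zsize :: "zphi \<Rightarrow> real" where
  "zsize z = \<bar>emb z\<bar> + \<bar>conj_emb z\<bar>"

lemma finite_zsize_less: "finite {z. zsize z < h}"
proof -
  define K where "K = \<lceil>h\<rceil>"
  have "\<bar>m\<bar> \<le> K \<and> \<bar>n\<bar> \<le> K" if small: "zsize (m, n) < h" for m n
  proof -
    have "emb (m, n) - conj_emb (m, n) = of_int n * (2 * phi - 1)"
      by (simp add: psi_def algebra_simps)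
    moreover have "emb (m, n) + conj_emb (m, n) = of_int (2 * m + n)"
      by (simp add: psi_def algebra_simps)
    ultimately have "\<bar>of_int n\<bar> * (2 * phi - 1) < h" "\<bar>of_int (2 * m + n)\<bar> < h"
      using small phi_gt_1 unfolding zsize_def by (simp_all add: abs_mult)
    moreover have "\<bar>of_int n\<bar> \<le> \<bar>of_int n\<bar> * (2 * phi - 1)"
      using phi_gt_1 by (simp add: mult_le_cancel_left1)
    ultimately have "\<bar>real_of_int n\<bar> < h" "\<bar>real_of_int m\<bar> < h" by linarith+
    then show ?thesis unfolding K_def by (simp add: le_ceiling_iff)
  qed
  then have "{z. zsize z < h} \<subseteq> {-K..K} \<times> {-K..K}" by (force simp: abs_le_iff)
  then show ?thesis by (rule finite_subset) simp
qed

definition height :: "zphi \<Rightarrow> zphi \<Rightarrow> real" where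
  "height p q = \<bar>emb p * conj_emb q\<bar> + \<bar>conj_emb p * emb q\<bar>"

lemma height_commute: "height q p = height p q"
  unfolding height_def by (simp add: mult.commute add.commute)

lemma height_eq_zsize: "height p q = zsize (zmult p (zconj q))"
  by (simp add: height_def zsize_def emb_zmult conj_emb_zmult emb_zconj conj_emb_zconj)

definition height_rank :: "zphi \<Rightarrow> zphi \<Rightarrow> nat" where
  "height_rank p q = card {z. zsize z < height p q}"

lemma height_rank_less:
  assumes "height p' q' < height p q"
  shows "height_rank p' q' < height_rank p q"
proof -
  have "{z. zsize z < height p' q'} \<subset> {z. zsize z < height p q}"
    using assms height_eq_zsize [of p' q'] by auto
  then show ?thesis
    unfolding height_rank_def by (rule psubset_card_mono [OF finite_zsize_less])
qed

text \<open>In the next two lemmas \<open>a, b\<close> are the values and \<open>A, B\<close> the conjugates of \<open>p, q\<close>;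
  the left-hand sides are the heights of the pairs from which \<open>\<sigma>\<^sub>0\<close>, resp. \<open>\<sigma>\<^sub>1\<close>,
  recovers \<open>(a, b)\<close>.\<close>

lemma descent_s0_height_less:
  fixes a b A B :: real
  assumes "0 < b" "B \<noteq> 0" "phi * b \<le> a"
  shows "\<bar>(a - phi * b) * B\<bar> + \<bar>(A - psi * B) * b\<bar> < \<bar>a * B\<bar> + \<bar>A * b\<bar>"
proof -
  have "0 \<le> a" using assms(1,3) phi_gt_1 by (smt (verit) mult_pos_pos)
  then have old: "\<bar>a * B\<bar> + \<bar>A * b\<bar> = a * \<bar>B\<bar> + \<bar>A\<bar> * b"
    using assms(1) by (simp add: abs_mult)
  have "\<bar>(a - phi * b) * B\<bar> = (a - phi * b) * \<bar>B\<bar>"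
    using assms(3) by (simp add: abs_mult)
  moreover have "\<bar>A - psi * B\<bar> \<le> \<bar>A\<bar> + (phi - 1) * \<bar>B\<bar>"
    using abs_triangle_ineq4 [of A "psi * B"] abs_psi by (simp add: abs_mult)
  then have "\<bar>(A - psi * B) * b\<bar> \<le> (\<bar>A\<bar> + (phi - 1) * \<bar>B\<bar>) * b"
    using assms(1) by (simp add: abs_mult mult_right_mono)
  moreover have "0 < b * \<bar>B\<bar>" using assms(1,2) by simp
  ultimately show ?thesis unfolding old by (simp add: algebra_simps)
qed

lemma descent_s1_height_less:
  fixes a b A B :: real
  assumes "0 < b" "B \<noteq> 0" "b \<le> a" "a < phi * b"
  shows "\<bar>phi * (a - b) * (psi * B - A)\<bar> + \<bar>psi * (A - B) * (phi * b - a)\<bar>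
           < \<bar>a * B\<bar> + \<bar>A * b\<bar>"
proof -
  have old: "\<bar>a * B\<bar> + \<bar>A * b\<bar> = a * \<bar>B\<bar> + b * \<bar>A\<bar>"
    using assms(1,3) by (simp add: abs_mult)
  have "\<bar>psi * B - A\<bar> \<le> (phi - 1) * \<bar>B\<bar> + \<bar>A\<bar>"
    using abs_triangle_ineq4 [of "psi * B" A] abs_psi by (simp add: abs_mult)
  then have "\<bar>phi * (a - b) * (psi * B - A)\<bar> \<le> phi * (a - b) * ((phi - 1) * \<bar>B\<bar> + \<bar>A\<bar>)"
    using assms(3) phi_gt_1 by (simp add: abs_mult mult_left_mono)
  moreover have "\<bar>A - B\<bar> \<le> \<bar>A\<bar> + \<bar>B\<bar>" by (rule abs_triangle_ineq4)
  then have "\<bar>psi * (A - B) * (phi * b - a)\<bar> \<le> (phi - 1) * (\<bar>A\<bar> + \<bar>B\<bar>) * (phi * b - a)"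
    using assms(4) abs_psi phi_gt_1 by (simp add: abs_mult mult_left_mono mult_right_mono)
  moreover have "phi * (a - b) * ((phi - 1) * \<bar>B\<bar> + \<bar>A\<bar>) + (phi - 1) * (\<bar>A\<bar> + \<bar>B\<bar>) * (phi * b - a)
     = a * \<bar>B\<bar> + b * \<bar>A\<bar> - ((phi - 1) * a * \<bar>B\<bar> + \<bar>A\<bar> * (phi * b - a))"
    by (simp add: algebra_simps phi_mult_phi)
  moreover have "0 < (phi - 1) * a * \<bar>B\<bar>" using phi_gt_1 assms(1-3) by simp
  moreover have "0 \<le> \<bar>A\<bar> * (phi * b - a)" using assms(4) by simp
  ultimately show ?thesis unfolding old by linarith
qed

lemma descent_step:
  assumes "0 < emb q" "emb q \<le> emb p"
  obtains p' q' where "0 \<le> emb p'" "0 < emb q'" "height p' q' < height p q"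
    "(emb p, emb q) = s0 (emb p', emb q') \<or> (emb p, emb q) = s1 (emb p', emb q')"
proof -
  have "conj_emb q \<noteq> 0" using assms(1) by (auto simp: conj_emb_eq_0_iff zero_prod_def)
  show ?thesis
  proof (cases "phi * emb q \<le> emb p")
    case True
    let ?p' = "p - zmult (0, 1) q"
    have "height ?p' q < height p q"
      using descent_s0_height_less [of "emb q" "conj_emb q" "emb p" "conj_emb p"] True assms
        \<open>conj_emb q \<noteq> 0\<close>
      by (simp add: height_def emb_diff conj_emb_diff emb_zmult conj_emb_zmult mult.commute)
    moreover have "(emb p, emb q) = s0 (emb ?p', emb q)" by (simp add: emb_diff emb_zmult)
    moreover have "0 \<le> emb ?p'" using True by (simp add: emb_diff emb_zmult)
    ultimately show ?thesis using that assms(1) by blast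
  next
    case False
    let ?p' = "zmult (0, 1) (p - q)" and ?q' = "zmult (0, 1) q - p"
    have "height ?p' ?q' < height p q"
      using descent_s1_height_less [of "emb q" "conj_emb q" "emb p" "conj_emb p"] False assms
        \<open>conj_emb q \<noteq> 0\<close>
      by (simp add: height_def emb_diff conj_emb_diff emb_zmult conj_emb_zmult
          mult.commute mult.left_commute)
    moreover have "(emb p, emb q) = s1 (emb ?p', emb ?q')"
      by (simp add: emb_diff emb_zmult algebra_simps phi_mult_phi)
    moreover have "0 \<le> emb ?p'" "0 < emb ?q'"
      using False assms phi_gt_1 by (simp_all add: emb_diff emb_zmult)
    ultimately show ?thesis using that by blast
  qed
qed

definition pos_cone :: "(real \<times> real) set" where
  "pos_cone = {l *\<^sub>R w | l w. 0 < l \<and> w \<in> pos_orbit}"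

lemma pos_coneI: "0 < l \<Longrightarrow> w \<in> pos_orbit \<Longrightarrow> l *\<^sub>R w \<in> pos_cone"
  unfolding pos_cone_def by blast

lemma pos_cone_closed:
  assumes "u \<in> pos_cone"
  shows "s0 u \<in> pos_cone" "s1 u \<in> pos_cone" "prod.swap u \<in> pos_cone"
proof -
  obtain l w where u: "u = l *\<^sub>R w" "0 < l" "w \<in> pos_orbit"
    using assms unfolding pos_cone_def by blast
  have "s0 u = l *\<^sub>R s0 w" "s1 u = l *\<^sub>R s1 w" "prod.swap u = l *\<^sub>R prod.swap w"
    unfolding u(1) by (cases w; simp add: algebra_simps)+
  then show "s0 u \<in> pos_cone" "s1 u \<in> pos_cone" "prod.swap u \<in> pos_cone"
    using u(2,3) by (auto intro!: pos_coneI pos_orbit.intros pos_orbit_swap)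
qed

lemma emb_pair_in_pos_cone:
  assumes "0 \<le> emb p" "0 \<le> emb q" "(emb p, emb q) \<noteq> 0"
  shows "(emb p, emb q) \<in> pos_cone"
  using assms
proof (induction "height_rank p q" arbitrary: p q rule: less_induct)
  case less
  have descend: "(emb p', emb q') \<in> pos_cone"
    if "0 < emb q'" "emb q' \<le> emb p'" and same_height: "height p' q' = height p q" for p' q'
  proof -
    obtain p'' q'' where "0 \<le> emb p''" "0 < emb q''" "height p'' q'' < height p' q'"
      and s: "(emb p', emb q') = s0 (emb p'', emb q'') \<or> (emb p', emb q') = s1 (emb p'', emb q'')"
      using descent_step \<open>0 < emb q'\<close> \<open>emb q' \<le> emb p'\<close> by blast
    moreover from this(3) have "height_rank p'' q'' < height_rank p q"
      using height_rank_less same_height by simp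
    ultimately have "(emb p'', emb q'') \<in> pos_cone"
      by (intro less.hyps) (auto simp: zero_prod_def)
    then show ?thesis using s pos_cone_closed by auto
  qed
  consider "emb q = 0" | "emb p = 0" | "0 < emb q" "emb q \<le> emb p" | "0 < emb p" "emb p \<le> emb q"
    using less.prems(1,2) by linarith
  then show ?case
  proof cases
    case 1
    then have "0 < emb p" using less.prems by (auto simp: zero_prod_def)
    then show ?thesis using pos_coneI [OF _ pos_orbit.e1, of "emb p"] 1 by simp
  next
    case 2
    then have "0 < emb q" using less.prems by (auto simp: zero_prod_def)
    then show ?thesis using pos_coneI [OF _ pos_orbit.e2, of "emb q"] 2 by simp
  next
    case 3
    then show ?thesis using descend by blast
  next
    case 4
    then have "(emb q, emb p) \<in> pos_cone" using descend height_commute by blast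
    then show ?thesis using pos_cone_closed(3) by fastforce
  qed
qed

lemma Zphi_abs_pair_in_pos_cone:
  assumes "a \<in> Zphi" "b \<in> Zphi" "(a, b) \<noteq> 0"
  shows "(\<bar>a\<bar>, \<bar>b\<bar>) \<in> pos_cone"
proof -
  have "\<bar>a\<bar> \<in> Zphi" "\<bar>b\<bar> \<in> Zphi" using assms(1,2) by (simp_all add: Zphi_abs_iff)
  then obtain p q where pq: "\<bar>a\<bar> = emb p" "\<bar>b\<bar> = emb q" unfolding Zphi_def by blast
  have "(emb p, emb q) \<noteq> 0" using assms(3) pq by (auto simp: zero_prod_def)
  moreover have "0 \<le> emb p" "0 \<le> emb q" using pq by (metis abs_ge_zero)+
  ultimately show ?thesis using emb_pair_in_pos_cone pq by simp
qed

section \<open>Sign variants of the positive orbit\<close>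

definition signed_orbit :: "(real \<times> real) set" where
  "signed_orbit = map_prod abs abs -` pos_orbit"

lemma signed_orbit_iff: "(x, y) \<in> signed_orbit \<longleftrightarrow> (\<bar>x\<bar>, \<bar>y\<bar>) \<in> pos_orbit"
  by (simp add: signed_orbit_def)

lemma signed_orbit_sign_flips [simp]:
  "apfst uminus u \<in> signed_orbit \<longleftrightarrow> u \<in> signed_orbit"
  "apsnd uminus u \<in> signed_orbit \<longleftrightarrow> u \<in> signed_orbit"
  by (cases u; simp add: signed_orbit_iff)+

lemma signed_orbit_swap:
  assumes "u \<in> signed_orbit"
  shows "prod.swap u \<in> signed_orbit"
proof (cases u)
  case (Pair x y)
  then show ?thesis using assms pos_orbit_swap [of "(\<bar>x\<bar>, \<bar>y\<bar>)"] by (simp add: signed_orbit_iff)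
qed

lemma pos_orbit_subset_signed_orbit:
  assumes "w \<in> pos_orbit"
  shows "w \<in> signed_orbit"
proof (cases w)
  case (Pair x y)
  then show ?thesis using assms pos_orbit_nonneg [OF assms] by (simp add: signed_orbit_iff)
qed

lemma sign_variants_of_abs:
  fixes u :: "real \<times> real"
  defines "w \<equiv> map_prod abs abs u"
  shows "u = w \<or> u = apfst uminus w \<or> u = apsnd uminus w \<or> u = apfst uminus (apsnd uminus w)"
proof (cases u)
  case (Pair x y)
  then show ?thesis unfolding w_def by (cases "0 \<le> x"; cases "0 \<le> y") simp_all
qed

lemma sign_flip_commute:
  "s0 (apfst uminus w) = apfst uminus (s0_inv w)" "s0_inv (apfst uminus w) = apfst uminus (s0 w)"
  "s0 (apsnd uminus w) = apsnd uminus (s0_inv w)" "s0_inv (apsnd uminus w) = apsnd uminus (s0 w)"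
  "s1 (apfst uminus w) = apfst uminus (s1_inv w)" "s1_inv (apfst uminus w) = apfst uminus (s1 w)"
  "s1 (apsnd uminus w) = apsnd uminus (s1_inv w)" "s1_inv (apsnd uminus w) = apsnd uminus (s1 w)"
  "s2 (apfst uminus w) = apfst uminus (s2_inv w)" "s2_inv (apfst uminus w) = apfst uminus (s2 w)"
  "s2 (apsnd uminus w) = apsnd uminus (s2_inv w)" "s2_inv (apsnd uminus w) = apsnd uminus (s2 w)"
  "s3 (apfst uminus w) = apfst uminus (s3_inv w)" "s3_inv (apfst uminus w) = apfst uminus (s3 w)"
  "s3 (apsnd uminus w) = apsnd uminus (s3_inv w)" "s3_inv (apsnd uminus w) = apsnd uminus (s3 w)"
  by (cases w; simp add: algebra_simps)+

lemma s0_inv_pos_orbit: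
  assumes "w \<in> pos_orbit"
  shows "s0_inv w \<in> signed_orbit"
  using assms
proof (cases rule: pos_orbit.cases)
  case e1
  then show ?thesis using pos_orbit.e1 pos_orbit_subset_signed_orbit by simp
next
  case e2
  then show ?thesis using pos_orbit.s0 [OF pos_orbit.e2] phi_gt_1 by (simp add: signed_orbit_iff)
next
  case (s1 u)
  have "s0_inv (s1 u) = apfst uminus (prod.swap (s0 u))"
    by (cases u) (simp add: algebra_simps phi_mult_phi phi_times_phi)
  then show ?thesis using s1 by (simp add: pos_orbit.intros pos_orbit_swap pos_orbit_subset_signed_orbit)
next
  case (s2 u)
  have "s0_inv (s2 u) = apfst uminus (s2 (prod.swap u))"
    by (cases u) (simp add: algebra_simps phi_mult_phi phi_times_phi)
  then show ?thesis using s2 by (simp add: pos_orbit.intros pos_orbit_swap pos_orbit_subset_signed_orbit)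
next
  case (s0 u)
  then show ?thesis using pos_orbit_subset_signed_orbit by (cases u rule: prod.exhaust) simp
next
  case (s3 u)
  have "s0_inv (s3 u) = apfst uminus (s1 (prod.swap u))"
    by (cases u) (simp add: algebra_simps phi_mult_phi phi_times_phi)
  then show ?thesis using s3 by (simp add: pos_orbit.intros pos_orbit_swap pos_orbit_subset_signed_orbit)
qed

lemma s1_inv_pos_orbit:
  assumes "w \<in> pos_orbit"
  shows "s1_inv w \<in> signed_orbit"
  using assms
proof (cases rule: pos_orbit.cases)
  case e1
  then show ?thesis using pos_orbit.s0 [OF pos_orbit.e2] phi_gt_1 by (simp add: signed_orbit_iff)
next
  case e2
  then show ?thesis using pos_orbit.s1 [OF pos_orbit.e2] phi_gt_1 by (simp add: signed_orbit_iff)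
next
  case (s0 u)
  have "s1_inv (s0 u) = apsnd uminus (s0 (prod.swap u))"
    by (cases u) (simp add: algebra_simps phi_mult_phi phi_times_phi)
  then show ?thesis using s0 by (simp add: pos_orbit.intros pos_orbit_swap pos_orbit_subset_signed_orbit)
next
  case (s2 u)
  have "s1_inv (s2 u) = apfst uminus (prod.swap (s0 u))"
    by (cases u) (simp add: algebra_simps phi_mult_phi phi_times_phi)
  then show ?thesis using s2 by (simp add: pos_orbit.intros pos_orbit_swap pos_orbit_subset_signed_orbit)
next
  case (s1 u)
  then show ?thesis using pos_orbit_subset_signed_orbit
    by (cases u rule: prod.exhaust) (simp add: algebra_simps phi_mult_phi phi_times_phi)
next
  case (s3 u)
  have "s1_inv (s3 u) = apfst uminus (s2 (prod.swap u))"
    by (cases u) (simp add: algebra_simps phi_mult_phi phi_times_phi)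
  then show ?thesis using s3 by (simp add: pos_orbit.intros pos_orbit_swap pos_orbit_subset_signed_orbit)
qed

lemma pos_orbit_maps_into_signed_orbit:
  assumes "w \<in> pos_orbit"
  shows "s0 w \<in> signed_orbit \<and> s0_inv w \<in> signed_orbit" "s1 w \<in> signed_orbit \<and> s1_inv w \<in> signed_orbit"
    "s2 w \<in> signed_orbit \<and> s2_inv w \<in> signed_orbit" "s3 w \<in> signed_orbit \<and> s3_inv w \<in> signed_orbit"
proof -
  \<comment> \<open>The swap conjugates \<open>\<sigma>\<^sub>0\<close> to \<open>\<sigma>\<^sub>3\<close> and \<open>\<sigma>\<^sub>1\<close> to \<open>\<sigma>\<^sub>2\<close>.\<close>
  have "s2_inv w = prod.swap (s1_inv (prod.swap w))" "s3_inv w = prod.swap (s0_inv (prod.swap w))"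
    by (cases w; simp)+
  then show "s0 w \<in> signed_orbit \<and> s0_inv w \<in> signed_orbit" "s1 w \<in> signed_orbit \<and> s1_inv w \<in> signed_orbit"
    "s2 w \<in> signed_orbit \<and> s2_inv w \<in> signed_orbit" "s3 w \<in> signed_orbit \<and> s3_inv w \<in> signed_orbit"
    using assms
    by (simp_all add: pos_orbit.intros pos_orbit_subset_signed_orbit pos_orbit_swap signed_orbit_swap
        s0_inv_pos_orbit s1_inv_pos_orbit)
qed

lemma signed_orbit_closedI:
  assumes pos: "\<And>w. w \<in> pos_orbit \<Longrightarrow> f w \<in> signed_orbit \<and> g w \<in> signed_orbit"
    and fst_f: "\<And>w. f (apfst uminus w) = apfst uminus (g w)"
    and fst_g: "\<And>w. g (apfst uminus w) = apfst uminus (f w)"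
    and snd_f: "\<And>w. f (apsnd uminus w) = apsnd uminus (g w)"
    and snd_g: "\<And>w. g (apsnd uminus w) = apsnd uminus (f w)"
    and u: "u \<in> signed_orbit"
  shows "f u \<in> signed_orbit \<and> g u \<in> signed_orbit"
proof -
  obtain w where w_def: "w = map_prod abs abs u" by simp
  then have "w \<in> pos_orbit" using u by (simp add: signed_orbit_def)
  with sign_variants_of_abs [of u, folded w_def] show ?thesis
    by (elim disjE) (simp_all only: fst_f fst_g snd_f snd_g signed_orbit_sign_flips pos)
qed

lemma signed_orbit_closed:
  assumes "u \<in> signed_orbit"
  shows "s0 u \<in> signed_orbit \<and> s0_inv u \<in> signed_orbit" "s1 u \<in> signed_orbit \<and> s1_inv u \<in> signed_orbit"
    "s2 u \<in> signed_orbit \<and> s2_inv u \<in> signed_orbit" "s3 u \<in> signed_orbit \<and> s3_inv u \<in> signed_orbit"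
proof -
  show "s0 u \<in> signed_orbit \<and> s0_inv u \<in> signed_orbit"
    by (rule signed_orbit_closedI [where f = s0 and g = s0_inv])
      (use pos_orbit_maps_into_signed_orbit(1) sign_flip_commute(1-4) assms in auto)
  show "s1 u \<in> signed_orbit \<and> s1_inv u \<in> signed_orbit"
    by (rule signed_orbit_closedI [where f = s1 and g = s1_inv])
      (use pos_orbit_maps_into_signed_orbit(2) sign_flip_commute(5-8) assms in auto)
  show "s2 u \<in> signed_orbit \<and> s2_inv u \<in> signed_orbit"
    by (rule signed_orbit_closedI [where f = s2 and g = s2_inv])
      (use pos_orbit_maps_into_signed_orbit(3) sign_flip_commute(9-12) assms in auto)
  show "s3 u \<in> signed_orbit \<and> s3_inv u \<in> signed_orbit"
    by (rule signed_orbit_closedI [where f = s3 and g = s3_inv])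
      (use pos_orbit_maps_into_signed_orbit(4) sign_flip_commute(13-16) assms in auto)
qed

section \<open>The orbit \<open>S\<close>\<close>

definition to_vec :: "real \<times> real \<Rightarrow> real^2" where
  "to_vec w = vector [fst w, snd w]"

lemma to_vec_nth [simp]: "to_vec w $ 1 = fst w" "to_vec w $ 2 = snd w"
  by (simp_all add: to_vec_def)

lemma to_vec_scaleR: "to_vec (c *\<^sub>R w) = c *\<^sub>R to_vec w"
  by (simp add: to_vec_def vec_eq_iff forall_2)

lemma to_vec_components: "to_vec (v $ 1, v $ 2) = v"
  by (simp add: vec_eq_iff forall_2)

lemma matrix_vector_mult_2:
  "(A :: real^2^2) *v vector [x, y] = vector [A$1$1 * x + A$1$2 * y, A$2$1 * x + A$2$2 * y]"
  by (simp add: vec_eq_iff forall_2 matrix_vector_mult_def sum_2)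

lemma matrix_matrix_mult_2:
  "(A :: real^2^2) ** (B :: real^2^2) =
     (vector [vector [A$1$1 * B$1$1 + A$1$2 * B$2$1, A$1$1 * B$1$2 + A$1$2 * B$2$2],
       vector [A$2$1 * B$1$1 + A$2$2 * B$2$1, A$2$1 * B$1$2 + A$2$2 * B$2$2]] :: real^2^2)"
  by (simp add: vec_eq_iff forall_2 matrix_matrix_mult_def sum_2)

lemma mat_1_2: "(mat 1 :: real^2^2) = vector [vector [1, 0], vector [0, 1]]"
  by (simp add: vec_eq_iff forall_2 mat_def)

lemma matrix_inv_eqI:
  fixes A B :: "'a::comm_ring_1^'n^'n"
  assumes "A ** B = mat 1" "B ** A = mat 1"
  shows "matrix_inv A = B"
proof -
  let ?A' = "matrix_inv A"
  have inv: "A ** ?A' = mat 1 \<and> ?A' ** A = mat 1"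
    unfolding matrix_inv_def using assms by (rule someI [of _ B, OF conjI])
  have "?A' = ?A' ** (A ** B)" using assms(1) by (simp add: matrix_mul_rid)
  also have "\<dots> = (?A' ** A) ** B" by (simp add: matrix_mul_assoc)
  also have "\<dots> = B" using inv by (simp add: matrix_mul_lid)
  finally show ?thesis .
qed

lemma sigma_inverse_products:
  "sigma0 ** vector [vector [1, - phi], vector [0, 1]] = mat 1"
  "vector [vector [1, - phi], vector [0, 1]] ** sigma0 = mat 1"
  "sigma1 ** vector [vector [phi, - phi], vector [- 1, phi]] = mat 1"
  "vector [vector [phi, - phi], vector [- 1, phi]] ** sigma1 = mat 1"
  "sigma2 ** vector [vector [phi, - 1], vector [- phi, phi]] = mat 1"
  "vector [vector [phi, - 1], vector [- phi, phi]] ** sigma2 = mat 1"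
  "sigma3 ** vector [vector [1, 0], vector [- phi, 1]] = mat 1"
  "vector [vector [1, 0], vector [- phi, 1]] ** sigma3 = mat 1"
  by (simp_all add: sigma0_def sigma1_def sigma2_def sigma3_def matrix_matrix_mult_2 mat_1_2 phi_times_phi)

lemma matrix_inv_sigma:
  "matrix_inv sigma0 = vector [vector [1, - phi], vector [0, 1]]"
  "matrix_inv sigma1 = vector [vector [phi, - phi], vector [- 1, phi]]"
  "matrix_inv sigma2 = vector [vector [phi, - 1], vector [- phi, phi]]"
  "matrix_inv sigma3 = vector [vector [1, 0], vector [- phi, 1]]"
  by (rule matrix_inv_eqI sigma_inverse_products)+

lemma matrix_inv_gens:
  assumes "g \<in> gens"
  shows "matrix_inv g ** g = mat 1" "g ** matrix_inv g = mat 1"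
  using assms unfolding gens_def by (auto simp: matrix_inv_sigma sigma_inverse_products)

lemma sigma_action:
  "sigma0 *v to_vec w = to_vec (s0 w)" "sigma1 *v to_vec w = to_vec (s1 w)"
  "sigma2 *v to_vec w = to_vec (s2 w)" "sigma3 *v to_vec w = to_vec (s3 w)"
  by (cases w;
      simp add: to_vec_def matrix_vector_mult_2 sigma0_def sigma1_def sigma2_def sigma3_def algebra_simps)+

lemma sigma_inv_action:
  "matrix_inv sigma0 *v to_vec w = to_vec (s0_inv w)" "matrix_inv sigma1 *v to_vec w = to_vec (s1_inv w)"
  "matrix_inv sigma2 *v to_vec w = to_vec (s2_inv w)" "matrix_inv sigma3 *v to_vec w = to_vec (s3_inv w)"
  by (cases w; simp add: to_vec_def matrix_inv_sigma matrix_vector_mult_2 algebra_simps)+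

lemma Gamma_mult:
  assumes "a \<in> Gamma" "b \<in> Gamma"
  shows "a ** b \<in> Gamma"
  using assms(1)
proof (induction rule: Gamma.induct)
  case id
  then show ?case using assms(2) by (simp add: matrix_mul_lid)
next
  case (mul g h)
  then show ?case by (metis Gamma.mul matrix_mul_assoc)
next
  case (mul_inv g h)
  then show ?case by (metis Gamma.mul_inv matrix_mul_assoc)
qed

lemma gens_in_Gamma:
  assumes "g \<in> gens"
  shows "g \<in> Gamma" "matrix_inv g \<in> Gamma"
  using Gamma.mul [OF assms Gamma.id] Gamma.mul_inv [OF assms Gamma.id]
  by (simp_all add: matrix_mul_rid)

lemma Gamma_left_inverse:
  assumes "\<gamma> \<in> Gamma"
  shows "\<exists>\<gamma>'\<in>Gamma. \<gamma>' ** \<gamma> = mat 1"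
  using assms
proof (induction rule: Gamma.induct)
  case id
  then show ?case using Gamma.id by (auto simp: matrix_mul_lid)
next
  case (mul g h)
  then obtain h' where h': "h' \<in> Gamma" "h' ** h = mat 1" by blast
  have "(h' ** matrix_inv g) ** (g ** h) = h' ** ((matrix_inv g ** g) ** h)"
    by (simp add: matrix_mul_assoc)
  also have "\<dots> = mat 1" using matrix_inv_gens(1) [OF mul(1)] h'(2) by (simp add: matrix_mul_lid)
  finally show ?case using Gamma_mult [OF h'(1) gens_in_Gamma(2) [OF mul(1)]] by blast
next
  case (mul_inv g h)
  then obtain h' where h': "h' \<in> Gamma" "h' ** h = mat 1" by blast
  have "(h' ** g) ** (matrix_inv g ** h) = h' ** ((g ** matrix_inv g) ** h)"
    by (simp add: matrix_mul_assoc)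
  also have "\<dots> = mat 1" using matrix_inv_gens(2) [OF mul_inv(1)] h'(2) by (simp add: matrix_mul_lid)
  finally show ?case using Gamma_mult [OF h'(1) gens_in_Gamma(1) [OF mul_inv(1)]] by blast
qed

lemma S_Gamma_closed: "\<gamma> \<in> Gamma \<Longrightarrow> v \<in> S \<Longrightarrow> \<gamma> *v v \<in> S"
  unfolding S_def by (auto simp: matrix_vector_mul_assoc intro: Gamma_mult)

lemma S_Gamma_transitive:
  assumes "u \<in> S"
  shows "\<exists>\<gamma>\<in>Gamma. \<gamma> *v u = to_vec (1, 0)"
proof -
  obtain \<delta> where "\<delta> \<in> Gamma" "u = \<delta> *v to_vec (1, 0)"
    using assms unfolding S_def by (auto simp: to_vec_def)
  moreover obtain \<gamma> where "\<gamma> \<in> Gamma" "\<gamma> ** \<delta> = mat 1"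
    using Gamma_left_inverse [OF \<open>\<delta> \<in> Gamma\<close>] by blast
  ultimately show ?thesis by (metis matrix_vector_mul_assoc matrix_vector_mul_lid)
qed

lemma S_closed_under_maps:
  assumes "to_vec w \<in> S"
  shows "to_vec (s0 w) \<in> S \<and> to_vec (s0_inv w) \<in> S" "to_vec (s1 w) \<in> S \<and> to_vec (s1_inv w) \<in> S"
    "to_vec (s2 w) \<in> S \<and> to_vec (s2_inv w) \<in> S" "to_vec (s3 w) \<in> S \<and> to_vec (s3_inv w) \<in> S"
proof -
  have closed: "g *v to_vec w \<in> S \<and> matrix_inv g *v to_vec w \<in> S" if "g \<in> gens" for g
    using S_Gamma_closed gens_in_Gamma that assms by blast
  have "sigma0 \<in> gens" "sigma1 \<in> gens" "sigma2 \<in> gens" "sigma3 \<in> gens"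
    by (simp_all add: gens_def)
  from this [THEN closed] show
    "to_vec (s0 w) \<in> S \<and> to_vec (s0_inv w) \<in> S" "to_vec (s1 w) \<in> S \<and> to_vec (s1_inv w) \<in> S"
    "to_vec (s2 w) \<in> S \<and> to_vec (s2_inv w) \<in> S" "to_vec (s3 w) \<in> S \<and> to_vec (s3_inv w) \<in> S"
    by (simp_all only: sigma_action sigma_inv_action)
qed

lemma S_unit_vectors:
  "to_vec (1, 0) \<in> S" "to_vec (0, 1) \<in> S" "to_vec (- 1, 0) \<in> S" "to_vec (0, - 1) \<in> S"
proof -
  show e1: "to_vec (1, 0) \<in> S"
    unfolding S_def to_vec_def using Gamma.id by force
  have "to_vec (s0_inv (s1 (1, 0))) \<in> S" using e1 S_closed_under_maps by blast
  then show e2: "to_vec (0, 1) \<in> S" by simp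
  have "to_vec (s1 (s0_inv (0, 1))) \<in> S" using e2 S_closed_under_maps by blast
  moreover have "s1 (s0_inv (0, 1)) = (- 1, 0)" by (simp add: phi_times_phi)
  ultimately show "to_vec (- 1, 0) \<in> S" by simp
  have "to_vec (s0 (s1_inv (1, 0))) \<in> S" using e1 S_closed_under_maps by blast
  then show "to_vec (0, - 1) \<in> S" by simp
qed

lemma pos_orbit_sign_variants_in_S:
  assumes "w \<in> pos_orbit"
  shows "to_vec w \<in> S \<and> to_vec (apfst uminus w) \<in> S \<and> to_vec (apsnd uminus w) \<in> S
    \<and> to_vec (apfst uminus (apsnd uminus w)) \<in> S"
  using assms
proof (induction rule: pos_orbit.induct)
  case e1
  then show ?case using S_unit_vectors by simp
next
  case e2
  then show ?case using S_unit_vectors by simp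
qed (simp_all only: S_closed_under_maps flip: sign_flip_commute)

lemma mem_S_iff: "v \<in> S \<longleftrightarrow> (v $ 1, v $ 2) \<in> signed_orbit"
proof
  assume "v \<in> S"
  then obtain \<gamma> where "\<gamma> \<in> Gamma" and v: "v = \<gamma> *v to_vec (1, 0)"
    unfolding S_def by (auto simp: to_vec_def)
  have "\<exists>u\<in>signed_orbit. \<gamma> *v to_vec (1, 0) = to_vec u"
    using \<open>\<gamma> \<in> Gamma\<close>
  proof (induction rule: Gamma.induct)
    case id
    show ?case using pos_orbit_subset_signed_orbit [OF pos_orbit.e1]
      by (intro bexI [of _ "(1, 0)"]) (simp_all add: matrix_vector_mul_lid)
  next
    case (mul g h)
    then obtain u where "u \<in> signed_orbit" "h *v to_vec (1, 0) = to_vec u" by blast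
    then show ?case using mul(1) signed_orbit_closed [of u]
      by (auto simp: gens_def sigma_action simp flip: matrix_vector_mul_assoc)
  next
    case (mul_inv g h)
    then obtain u where "u \<in> signed_orbit" "h *v to_vec (1, 0) = to_vec u" by blast
    then show ?case using mul_inv(1) signed_orbit_closed [of u]
      by (auto simp: gens_def sigma_inv_action simp flip: matrix_vector_mul_assoc)
  qed
  then show "(v $ 1, v $ 2) \<in> signed_orbit" using v by auto
next
  assume "(v $ 1, v $ 2) \<in> signed_orbit"
  then have "map_prod abs abs (v $ 1, v $ 2) \<in> pos_orbit" by (simp add: signed_orbit_def)
  from pos_orbit_sign_variants_in_S [OF this] sign_variants_of_abs [of "(v $ 1, v $ 2)"]
  show "v \<in> S" by (auto simp: to_vec_components)
qed

lemma S_Zphi: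
  assumes "v \<in> S"
  shows "v $ 1 \<in> Zphi" "v $ 2 \<in> Zphi"
proof -
  have "(\<bar>v $ 1\<bar>, \<bar>v $ 2\<bar>) \<in> pos_orbit" using assms by (simp add: mem_S_iff signed_orbit_iff)
  then show "v $ 1 \<in> Zphi" "v $ 2 \<in> Zphi" using pos_orbit_Zphi by (fastforce simp: Zphi_abs_iff)+
qed

lemma S_scaled_eq_1:
  assumes "u \<in> S" "c *\<^sub>R u \<in> S" "0 < c"
  shows "c = 1"
proof -
  obtain \<gamma> where "\<gamma> \<in> Gamma" "\<gamma> *v u = to_vec (1, 0)" using S_Gamma_transitive [OF assms(1)] by blast
  moreover have "\<gamma> *v (c *\<^sub>R u) = to_vec (c, 0)"
    using \<open>\<gamma> *v u = to_vec (1, 0)\<close> by (simp add: matrix_vector_mult_scaleR flip: to_vec_scaleR)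
  ultimately have "to_vec (c, 0) \<in> S" using S_Gamma_closed [OF _ assms(2)] by fastforce
  then have "(c, 0) \<in> pos_orbit" using assms(3) by (simp add: mem_S_iff signed_orbit_iff)
  then show ?thesis using pos_orbit_shape by fastforce
qed

lemma S_difference_to_horizontal:
  assumes "v1 \<in> S" "v2 \<in> S" "u \<in> S" "v1 - v2 = l *\<^sub>R u"
  shows "\<exists>p\<in>S. \<exists>q\<in>S. p - q = to_vec (l, 0)"
proof -
  obtain \<gamma> where "\<gamma> \<in> Gamma" "\<gamma> *v u = to_vec (1, 0)" using S_Gamma_transitive [OF assms(3)] by blast
  moreover have "\<gamma> *v v1 - \<gamma> *v v2 = l *\<^sub>R (\<gamma> *v u)"
    using assms(4) by (simp flip: matrix_vector_mult_diff_distrib matrix_vector_mult_scaleR)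
  ultimately have "\<gamma> *v v1 - \<gamma> *v v2 = to_vec (l, 0)"
    by (simp flip: to_vec_scaleR)
  then show ?thesis using S_Gamma_closed \<open>\<gamma> \<in> Gamma\<close> assms(1,2) by blast
qed

lemma gcd_Gamma_plus_eqI:
  assumes "0 < l" "vector [\<bar>x\<bar> / l, \<bar>y\<bar> / l] \<in> S"
  shows "gcd_Gamma_plus x y = l"
  unfolding gcd_Gamma_plus_def
proof (rule the_equality)
  show "0 < l \<and> vector [\<bar>x\<bar> / l, \<bar>y\<bar> / l] \<in> S" using assms by simp
next
  fix l' assume l': "0 < l' \<and> vector [\<bar>x\<bar> / l', \<bar>y\<bar> / l'] \<in> S"
  have "(vector [\<bar>x\<bar> / l, \<bar>y\<bar> / l] :: real^2) = (l' / l) *\<^sub>R vector [\<bar>x\<bar> / l', \<bar>y\<bar> / l']"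
    using l' by (simp add: vec_eq_iff forall_2)
  moreover have "0 < l' / l" using l' assms(1) by simp
  ultimately have "l' / l = 1" using S_scaled_eq_1 l' assms(2) by metis
  then show "l' = l" using assms(1) by simp
qed

lemma norm_to_vec_horizontal: "norm (to_vec (a, 0)) = \<bar>a\<bar>"
  unfolding norm_vec_def L2_set_def by (simp add: sum_2)

theorem lemma3p3:
  fixes v1 v2 :: "real^2"
  assumes "v1 \<in> S" and "v2 \<in> S" and "v1 \<noteq> v2"
  shows "\<exists>p\<in>S. \<exists>q\<in>S. p $ 2 = q $ 2 \<and>
           dist p q = gcd_Gamma_plus ((v1 - v2) $ 1) ((v1 - v2) $ 2)"
proof -
  define x y where "x = (v1 - v2) $ 1" and "y = (v1 - v2) $ 2"
  have "x \<in> Zphi" "y \<in> Zphi"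
    unfolding x_def y_def using S_Zphi assms(1,2) by (simp_all add: Zphi_diff)
  moreover have "(x, y) \<noteq> 0"
    using assms(3) unfolding x_def y_def by (auto simp: vec_eq_iff forall_2 zero_prod_def)
  ultimately obtain l w where "0 < l" "w \<in> pos_orbit" "(\<bar>x\<bar>, \<bar>y\<bar>) = l *\<^sub>R w"
    using Zphi_abs_pair_in_pos_cone unfolding pos_cone_def by blast
  then have w: "w = (\<bar>x\<bar> / l, \<bar>y\<bar> / l)" by (cases w) simp
  have "gcd_Gamma_plus x y = l"
    using \<open>0 < l\<close> \<open>w \<in> pos_orbit\<close>
    by (intro gcd_Gamma_plus_eqI) (simp_all add: mem_S_iff pos_orbit_subset_signed_orbit w)
  have "to_vec (x / l, y / l) \<in> S"
    using \<open>w \<in> pos_orbit\<close> \<open>0 < l\<close> by (simp add: mem_S_iff signed_orbit_iff w)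
  moreover have "v1 - v2 = l *\<^sub>R to_vec (x / l, y / l)"
    using \<open>0 < l\<close> by (simp add: vec_eq_iff forall_2 x_def y_def)
  ultimately obtain p q where "p \<in> S" "q \<in> S" and pq: "p - q = to_vec (l, 0)"
    using S_difference_to_horizontal [OF assms(1,2)] by blast
  moreover have "p $ 2 = q $ 2" using arg_cong [OF pq, of "\<lambda>v. v $ 2"] by simp
  moreover have "dist p q = l" using pq \<open>0 < l\<close> by (simp add: dist_norm norm_to_vec_horizontal)
  ultimately show ?thesis
    using \<open>gcd_Gamma_plus x y = l\<close> unfolding x_def [symmetric] y_def [symmetric] by auto
qed

end
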